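(* Let $\mathbf{C}$ be a category enriched over $\mathbf{Top}$ all of whose morphisms are monomorphisms, let $C, D \in \mathrm{Ob}(\mathbf{C})$ be hom-equivalent, and let $\mathfrak{G} = (G_A)_{A \in \mathrm{Ob}(\mathbf{C})}$ be a family of groups with $G_A \le \mathrm{Aut}_\mathbf{C}(A)$ for all $A$. Let $A \in \mathrm{Ob}(\mathbf{C})$ be such that $\hom(A,C) \ne \varnothing$. (a) $T_\mathbf{C}(A,C) = T_\mathbf{C}(A,D)$. (b) If $\hom(A,S)$ is locally compact second-countable Hausdorff for every $S \in \mathrm{Ob}(\mathbf{C})$ and $G_A$ is a finite discrete group, then $T^\mathfrak{G}_\mathbf{C}(A,C) = T^\mathfrak{G}_\mathbf{C}(A,D)$.
   Context: Objects $C, D$ are hom-equivalent if $\hom(C,D) \ne \varnothing$ and $\hom(D,C) \ne\varnothing$. A category is enriched over $\mathbf{Top}$ if each homset is a topological space and composition is continuous. $\mathrm{Aut}_\mathbf{C}(A)$ is the group of invertible morphisms $A\to A$ with the subspace topology from $\hom(A,A)$. For $f,g \in \hom(A,X)$, $f \sim_\mathfrak{G} g$ iff $f = g\cdot\alpha$ for some $\alpha \in G_A$; $\binom{X}{A}_\mathfrak{G} = \hom(A,X)/{\sim_\mathfrak{G}}$ with the quotient topology; $w \cdot \binom{X}{A}_\mathfrak{G} = \{(w\cdot f)/{\sim_\mathfrak{G}} : f \in \hom(A,X)\}$ for $w\in\hom(X,Y)$. A Borel $k$-coloring is a map to $\{0,\dots,k-1\}$ with Borel fibers. $S \overset{\mathfrak{G}}{\longrightarrow}_\flat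 (S)^A_{k,n}$ means: every Borel $k$-coloring $\chi$ of $\binom{S}{A}_\mathfrak{G}$ admits $w \in \hom(S,S)$ with $|\chi(w \cdot \binom{S}{A}_\mathfrak{G})| \le n$. $T^\mathfrak{G}_\mathbf{C}(A,S)$ is the least positive integer $n$ with $S \overset{\mathfrak{G}}{\longrightarrow}_\flat (S)^A_{k,n}$ for all $k \ge 2$ ($\infty$ if none). $T_\mathbf{C}(A,S)$ is this quantity for the trivial groups $\{\mathrm{id}_A\}$ (Borel colorings of $\hom(A,S)$). *)

theory Defs
  imports "HOL-Analysis.Analysis"
begin

text \<open>Objects are all elements of the type 'o;
  morphisms live in type 'm. hom A B is the hom-set, cmp g f is g after f,
  idm A is the identity of A, and homtop A B is the topology on hom A B.\<close>

definition top_category ::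
  "('o \<Rightarrow> 'o \<Rightarrow> 'm set) \<Rightarrow> ('m \<Rightarrow> 'm \<Rightarrow> 'm) \<Rightarrow> ('o \<Rightarrow> 'm)
   \<Rightarrow> ('o \<Rightarrow> 'o \<Rightarrow> 'm topology) \<Rightarrow> bool" where
  "top_category hom cmp idm homtop \<longleftrightarrow>
     (\<forall>A B A' B'. hom A B \<inter> hom A' B' \<noteq> {} \<longrightarrow> A = A' \<and> B = B') \<and>
     (\<forall>A. idm A \<in> hom A A) \<and>
     (\<forall>A B C f g. f \<in> hom A B \<longrightarrow> g \<in> hom B C \<longrightarrow> cmp g f \<in> hom A C) \<and>
     (\<forall>A B f. f \<in> hom A B \<longrightarrow> cmp (idm B) f = f \<and> cmp f (idm A) = f) \<and>
     (\<forall>A B C D f g h. f \<in> hom A B \<longrightarrow> g \<in> hom B C \<longrightarrow> h \<in> hom C D \<longrightarrow>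
          cmp h (cmp g f) = cmp (cmp h g) f) \<and>
     (\<forall>A B. topspace (homtop A B) = hom A B) \<and>
     (\<forall>A B C. continuous_map (prod_topology (homtop B C) (homtop A B)) (homtop A C)
                 (\<lambda>(g, f). cmp g f))"

definition all_mono :: "('o \<Rightarrow> 'o \<Rightarrow> 'm set) \<Rightarrow> ('m \<Rightarrow> 'm \<Rightarrow> 'm) \<Rightarrow> bool" where
  "all_mono hom cmp \<longleftrightarrow>
     (\<forall>A B C f g h. f \<in> hom B C \<longrightarrow> g \<in> hom A B \<longrightarrow> h \<in> hom A B \<longrightarrow>
        cmp f g = cmp f h \<longrightarrow> g = h)"

definition hom_equiv :: "('o \<Rightarrow> 'o \<Rightarrow> 'm set) \<Rightarrow> 'o \<Rightarrow> 'o \<Rightarrow> bool" where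
  "hom_equiv hom C D \<longleftrightarrow> hom C D \<noteq> {} \<and> hom D C \<noteq> {}"

definition Aut :: "('o \<Rightarrow> 'o \<Rightarrow> 'm set) \<Rightarrow> ('m \<Rightarrow> 'm \<Rightarrow> 'm) \<Rightarrow> ('o \<Rightarrow> 'm) \<Rightarrow> 'o \<Rightarrow> 'm set" where
  "Aut hom cmp idm A = {f \<in> hom A A. \<exists>g \<in> hom A A. cmp g f = idm A \<and> cmp f g = idm A}"

definition aut_subgroup ::
  "('o \<Rightarrow> 'o \<Rightarrow> 'm set) \<Rightarrow> ('m \<Rightarrow> 'm \<Rightarrow> 'm) \<Rightarrow> ('o \<Rightarrow> 'm) \<Rightarrow> 'o \<Rightarrow> 'm set \<Rightarrow> bool" where
  "aut_subgroup hom cmp idm A H \<longleftrightarrow>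
     H \<subseteq> Aut hom cmp idm A \<and> idm A \<in> H \<and>
     (\<forall>f\<in>H. \<forall>g\<in>H. cmp f g \<in> H) \<and>
     (\<forall>f\<in>H. \<exists>g\<in>H. cmp g f = idm A \<and> cmp f g = idm A)"

definition quotient_top :: "'a topology \<Rightarrow> ('a \<Rightarrow> 'b) \<Rightarrow> 'b topology" where
  "quotient_top X p = topology (\<lambda>U. U \<subseteq> p ` topspace X \<and> openin X {x \<in> topspace X. p x \<in> U})"

definition borel_sets :: "'a topology \<Rightarrow> 'a set set" where
  "borel_sets X = sigma_sets (topspace X) {U. openin X U}"

definition gclass ::
  "('o \<Rightarrow> 'o \<Rightarrow> 'm set) \<Rightarrow> ('m \<Rightarrow> 'm \<Rightarrow> 'm) \<Rightarrow> ('o \<Rightarrow> 'm set) \<Rightarrow> 'o \<Rightarrow> 'o \<Rightarrow> 'm \<Rightarrow> 'm set" where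
  "gclass hom cmp G A X f = {g \<in> hom A X. \<exists>\<alpha>\<in>G A. f = cmp g \<alpha>}"

definition binom_top ::
  "('o \<Rightarrow> 'o \<Rightarrow> 'm set) \<Rightarrow> ('m \<Rightarrow> 'm \<Rightarrow> 'm) \<Rightarrow> ('o \<Rightarrow> 'o \<Rightarrow> 'm topology) \<Rightarrow> ('o \<Rightarrow> 'm set)
   \<Rightarrow> 'o \<Rightarrow> 'o \<Rightarrow> 'm set topology" where
  "binom_top hom cmp homtop G X A = quotient_top (homtop A X) (gclass hom cmp G A X)"

definition borel_coloring :: "'a topology \<Rightarrow> nat \<Rightarrow> ('a \<Rightarrow> nat) \<Rightarrow> bool" where
  "borel_coloring X k col \<longleftrightarrow> (\<forall>x\<in>topspace X. col x < k) \<and>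
     (\<forall>i<k. {x \<in> topspace X. col x = i} \<in> borel_sets X)"

definition arrow ::
  "('o \<Rightarrow> 'o \<Rightarrow> 'm set) \<Rightarrow> ('m \<Rightarrow> 'm \<Rightarrow> 'm) \<Rightarrow> ('o \<Rightarrow> 'o \<Rightarrow> 'm topology) \<Rightarrow> ('o \<Rightarrow> 'm set)
   \<Rightarrow> 'o \<Rightarrow> 'o \<Rightarrow> nat \<Rightarrow> nat \<Rightarrow> bool" where
  "arrow hom cmp homtop G S A k n \<longleftrightarrow>
     (\<forall>col. borel_coloring (binom_top hom cmp homtop G S A) k col \<longrightarrow>
        (\<exists>w\<in>hom S S. card (col ` (\<lambda>f. gclass hom cmp G A S (cmp w f)) ` hom A S) \<le> n))"

definition TG ::
  "('o \<Rightarrow> 'o \<Rightarrow> 'm set) \<Rightarrow> ('m \<Rightarrow> 'm \<Rightarrow> 'm) \<Rightarrow> ('o \<Rightarrow> 'o \<Rightarrow> 'm topology) \<Rightarrow> ('o \<Rightarrow> 'm set)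
   \<Rightarrow> 'o \<Rightarrow> 'o \<Rightarrow> enat" where
  "TG hom cmp homtop G A S =
     (if \<exists>n>0. \<forall>k\<ge>2. arrow hom cmp homtop G S A k n
      then enat (LEAST n. n > 0 \<and> (\<forall>k\<ge>2. arrow hom cmp homtop G S A k n))
      else \<infinity>)"

definition T ::
  "('o \<Rightarrow> 'o \<Rightarrow> 'm set) \<Rightarrow> ('m \<Rightarrow> 'm \<Rightarrow> 'm) \<Rightarrow> ('o \<Rightarrow> 'm) \<Rightarrow> ('o \<Rightarrow> 'o \<Rightarrow> 'm topology)
   \<Rightarrow> 'o \<Rightarrow> 'o \<Rightarrow> enat" where
  "T hom cmp idm homtop A S = TG hom cmp homtop (\<lambda>B. {idm B}) A S"

end

theory Submission
  imports Defs
begin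

text \<open>Fix \<open>d \<in> hom(C,D)\<close> and \<open>e \<in> hom(D,C)\<close>. Postcomposition with \<open>d\<close> is continuous and respects
  \<open>\<sim>\<^sub>G\<close>, so it descends to a continuous map \<open>\<psi>\<close> from the quotient space of \<open>hom(A,C)\<close> to that of
  \<open>hom(A,D)\<close>. A Borel colouring \<open>\<chi>\<close> of the latter pulls back to the Borel colouring \<open>\<chi> \<circ> \<psi>\<close> of the
  former; if \<open>w \<in> hom(C,C)\<close> leaves at most \<open>n\<close> colours for \<open>\<chi> \<circ> \<psi>\<close>, then \<open>d w e \<in> hom(D,D)\<close> leaves at
  most \<open>n\<close> colours for \<open>\<chi>\<close>, since \<open>[d w e f] = \<psi> [w (e f)]\<close>. By symmetry \<open>C\<close> and \<open>D\<close> satisfy the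
  same partition arrows, hence have the same (Borel) Ramsey degrees.\<close>

lemma borel_sets_continuous_map_preimage:
  assumes g: "continuous_map X Y g" and B: "B \<in> borel_sets Y"
  shows "{x \<in> topspace X. g x \<in> B} \<in> borel_sets X"
proof -
  have g_into: "g \<in> topspace X \<rightarrow> topspace Y"
    using g by (auto simp: continuous_map_def)
  have "g -` B \<inter> topspace X \<in> {g -` U \<inter> topspace X |U. U \<in> sigma_sets (topspace Y) {U. openin Y U}}"
    using B unfolding borel_sets_def by blast
  also have "\<dots> = sigma_sets (topspace X) {g -` U \<inter> topspace X |U. U \<in> {U. openin Y U}}"
    by (rule sigma_sets_vimage_commute[OF g_into])
  also have "\<dots> \<subseteq> sigma_sets (topspace X) {U. openin X U}"
  proof (rule sigma_sets_mono, safe)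
    fix U assume "openin Y U"
    then have "openin X {x \<in> topspace X. g x \<in> U}"
      using g by (simp add: continuous_map_def)
    then show "g -` U \<inter> topspace X \<in> sigma_sets (topspace X) {U. openin X U}"
      by (auto intro: sigma_sets.Basic simp: Int_def vimage_def conj_commute)
  qed
  finally show ?thesis
    unfolding borel_sets_def by (simp add: Int_def vimage_def conj_commute)
qed

lemma borel_coloring_continuous_map_pullback:
  assumes g: "continuous_map X Y g" and col: "borel_coloring Y k col"
  shows "borel_coloring X k (col \<circ> g)"
  unfolding borel_coloring_def
proof (intro conjI ballI allI impI)
  fix x assume "x \<in> topspace X"
  then show "(col \<circ> g) x < k"
    using g col by (auto simp: borel_coloring_def continuous_map_def)
next
  fix i assume "i < k"
  then have "{y \<in> topspace Y. col y = i} \<in> borel_sets Y"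
    using col by (simp add: borel_coloring_def)
  from borel_sets_continuous_map_preimage[OF g this]
  show "{x \<in> topspace X. (col \<circ> g) x = i} \<in> borel_sets X"
    using g by (simp add: continuous_map_def Pi_iff conj_ac cong: conj_cong)
qed

lemma borel_coloring_image_finite:
  assumes "borel_coloring X k col" and "S \<subseteq> topspace X"
  shows "finite (col ` S)"
proof (rule finite_subset)
  show "col ` S \<subseteq> {..<k}"
    using assms by (auto simp: borel_coloring_def)
qed simp

lemma openin_quotient_top:
  "openin (quotient_top X p) U \<longleftrightarrow> U \<subseteq> p ` topspace X \<and> openin X {x \<in> topspace X. p x \<in> U}"
proof -
  have "istopology (\<lambda>U. U \<subseteq> p ` topspace X \<and> openin X {x \<in> topspace X. p x \<in> U})"
  proof -
    have "{x \<in> topspace X. p x \<in> S \<inter> T} = {x \<in> topspace X. p x \<in> S} \<inter> {x \<in> topspace X. p x \<in> T}"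
      for S T by auto
    moreover have "{x \<in> topspace X. p x \<in> \<Union>K} = (\<Union>S\<in>K. {x \<in> topspace X. p x \<in> S})" for K
      by auto
    ultimately show ?thesis
      unfolding istopology_def by auto
  qed
  then show ?thesis
    unfolding quotient_top_def by simp
qed

lemma topspace_quotient_top: "topspace (quotient_top X p) = p ` topspace X"
proof (rule antisym)
  show "topspace (quotient_top X p) \<subseteq> p ` topspace X"
    using openin_topspace[of "quotient_top X p"] unfolding openin_quotient_top by blast
  have "{x \<in> topspace X. p x \<in> p ` topspace X} = topspace X"
    by auto
  then show "p ` topspace X \<subseteq> topspace (quotient_top X p)"
    by (intro openin_subset) (simp add: openin_quotient_top)
qed

lemma quotient_map_quotient_top: "quotient_map X (quotient_top X p) p"
  unfolding quotient_map_def by (auto simp: openin_quotient_top topspace_quotient_top)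

lemma top_categoryD:
  assumes "top_category hom cmp idm homtop"
  shows "\<And>f g A B C. f \<in> hom A B \<Longrightarrow> g \<in> hom B C \<Longrightarrow> cmp g f \<in> hom A C"
    and "\<And>A. idm A \<in> hom A A"
    and "\<And>f A B. f \<in> hom A B \<Longrightarrow> cmp (idm B) f = f"
    and "\<And>f A B. f \<in> hom A B \<Longrightarrow> cmp f (idm A) = f"
    and "\<And>f g h A B C D. f \<in> hom A B \<Longrightarrow> g \<in> hom B C \<Longrightarrow> h \<in> hom C D \<Longrightarrow>
           cmp h (cmp g f) = cmp (cmp h g) f"
    and "\<And>A B. topspace (homtop A B) = hom A B"
    and "\<And>A B C. continuous_map (prod_topology (homtop B C) (homtop A B)) (homtop A C)
           (\<lambda>(g, f). cmp g f)"
  using assms unfolding top_category_def by meson+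

lemma aut_subgroupD:
  assumes "aut_subgroup hom cmp idm A H"
  shows "H \<subseteq> hom A A" and "idm A \<in> H"
    and "\<And>\<alpha> \<beta>. \<alpha> \<in> H \<Longrightarrow> \<beta> \<in> H \<Longrightarrow> cmp \<alpha> \<beta> \<in> H"
    and "\<And>\<alpha>. \<alpha> \<in> H \<Longrightarrow> \<exists>\<beta>\<in>H. cmp \<alpha> \<beta> = idm A"
  using assms unfolding aut_subgroup_def Aut_def by blast+

context
  fixes hom :: "'o \<Rightarrow> 'o \<Rightarrow> 'm set" and cmp :: "'m \<Rightarrow> 'm \<Rightarrow> 'm"
    and idm :: "'o \<Rightarrow> 'm" and homtop :: "'o \<Rightarrow> 'o \<Rightarrow> 'm topology"
  assumes cat: "top_category hom cmp idm homtop"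
begin

lemmas hom_comp_closed = top_categoryD(1)[OF cat]
  and idm_in_hom = top_categoryD(2)[OF cat]
  and idm_comp = top_categoryD(3)[OF cat]
  and comp_idm = top_categoryD(4)[OF cat]
  and comp_assoc_hom = top_categoryD(5)[OF cat]
  and topspace_homtop = top_categoryD(6)[OF cat]

lemma continuous_map_postcompose:
  assumes d: "d \<in> hom B C"
  shows "continuous_map (homtop A B) (homtop A C) (cmp d)"
proof -
  have "continuous_map (homtop A B) (prod_topology (homtop B C) (homtop A B)) (\<lambda>f. (d, f))"
    using d by (simp add: continuous_map_paired topspace_homtop)
  from continuous_map_compose[OF this top_categoryD(7)[OF cat]] show ?thesis
    by (simp add: o_def)
qed

lemma aut_subgroup_trivial: "aut_subgroup hom cmp idm A {idm A}"
  using idm_in_hom idm_comp[OF idm_in_hom] unfolding aut_subgroup_def Aut_def by auto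

lemma topspace_binom_top: "topspace (binom_top hom cmp homtop G X A) = gclass hom cmp G A X ` hom A X"
  unfolding binom_top_def topspace_quotient_top topspace_homtop ..

lemma quotient_map_gclass:
  "quotient_map (homtop A X) (binom_top hom cmp homtop G X A) (gclass hom cmp G A X)"
  unfolding binom_top_def by (rule quotient_map_quotient_top)

context
  fixes G :: "'o \<Rightarrow> 'm set" and A :: 'o
  assumes grp: "aut_subgroup hom cmp idm A (G A)"
begin

lemma gclass_comp_right:
  assumes f: "f \<in> hom A X" and \<alpha>: "\<alpha> \<in> G A"
  shows "gclass hom cmp G A X (cmp f \<alpha>) = gclass hom cmp G A X f"
proof (intro set_eqI iffI)
  fix g
  assume "g \<in> gclass hom cmp G A X (cmp f \<alpha>)"
  then obtain \<beta> where g: "g \<in> hom A X" and \<beta>: "\<beta> \<in> G A" and eq: "cmp f \<alpha> = cmp g \<beta>"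
    unfolding gclass_def by blast
  obtain \<alpha>' where \<alpha>': "\<alpha>' \<in> G A" and inv: "cmp \<alpha> \<alpha>' = idm A"
    using aut_subgroupD(4)[OF grp \<alpha>] by blast
  have \<alpha>_hom: "\<alpha> \<in> hom A A" and \<alpha>'_hom: "\<alpha>' \<in> hom A A" and \<beta>_hom: "\<beta> \<in> hom A A"
    using \<alpha> \<alpha>' \<beta> aut_subgroupD(1)[OF grp] by auto
  have "f = cmp f (cmp \<alpha> \<alpha>')"
    using inv comp_idm[OF f] by simp
  also have "\<dots> = cmp (cmp g \<beta>) \<alpha>'"
    using comp_assoc_hom[OF \<alpha>'_hom \<alpha>_hom f] eq by simp
  also have "\<dots> = cmp g (cmp \<beta> \<alpha>')"
    using comp_assoc_hom[OF \<alpha>'_hom \<beta>_hom g] by simp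
  finally show "g \<in> gclass hom cmp G A X f"
    unfolding gclass_def using g aut_subgroupD(3)[OF grp \<beta> \<alpha>'] by blast
next
  fix g
  assume "g \<in> gclass hom cmp G A X f"
  then obtain \<beta> where g: "g \<in> hom A X" and \<beta>: "\<beta> \<in> G A" and eq: "f = cmp g \<beta>"
    unfolding gclass_def by blast
  have \<alpha>_hom: "\<alpha> \<in> hom A A" and \<beta>_hom: "\<beta> \<in> hom A A"
    using \<alpha> \<beta> aut_subgroupD(1)[OF grp] by auto
  have "cmp f \<alpha> = cmp g (cmp \<beta> \<alpha>)"
    using eq comp_assoc_hom[OF \<alpha>_hom \<beta>_hom g] by simp
  then show "g \<in> gclass hom cmp G A X (cmp f \<alpha>)"
    unfolding gclass_def using g aut_subgroupD(3)[OF grp \<beta> \<alpha>] by blast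
qed

lemma gclass_self: "f \<in> hom A X \<Longrightarrow> f \<in> gclass hom cmp G A X f"
  using comp_idm[of f] aut_subgroupD(2)[OF grp] unfolding gclass_def by force

lemma gclass_comp_left_cong:
  assumes f1: "f1 \<in> hom A X" and f2: "f2 \<in> hom A X" and d: "d \<in> hom X Y"
    and eq: "gclass hom cmp G A X f1 = gclass hom cmp G A X f2"
  shows "gclass hom cmp G A Y (cmp d f1) = gclass hom cmp G A Y (cmp d f2)"
proof -
  have "f1 \<in> gclass hom cmp G A X f2"
    using gclass_self[OF f1] eq by simp
  then obtain \<alpha> where \<alpha>: "\<alpha> \<in> G A" and f2_eq: "f2 = cmp f1 \<alpha>"
    unfolding gclass_def by blast
  have "cmp d f2 = cmp (cmp d f1) \<alpha>"
    using f2_eq comp_assoc_hom[OF _ f1 d] \<alpha> aut_subgroupD(1)[OF grp] by auto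
  then show ?thesis
    using gclass_comp_right[OF hom_comp_closed[OF f1 d] \<alpha>] by simp
qed

lemma binom_top_induced_map:
  assumes d: "d \<in> hom C D"
  obtains \<psi> where "continuous_map (binom_top hom cmp homtop G C A) (binom_top hom cmp homtop G D A) \<psi>"
    and "\<And>f. f \<in> hom A C \<Longrightarrow> \<psi> (gclass hom cmp G A C f) = gclass hom cmp G A D (cmp d f)"
proof -
  let ?qC = "gclass hom cmp G A C" and ?qD = "gclass hom cmp G A D"
  have cont: "continuous_map (homtop A C) (binom_top hom cmp homtop G D A) (?qD \<circ> cmp d)"
    using continuous_map_postcompose[OF d] quotient_imp_continuous_map[OF quotient_map_gclass]
    by (rule continuous_map_compose)
  have resp: "(?qD \<circ> cmp d) f1 = (?qD \<circ> cmp d) f2"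
    if "f1 \<in> topspace (homtop A C)" "f2 \<in> topspace (homtop A C)" "?qC f1 = ?qC f2" for f1 f2
    using gclass_comp_left_cong[OF that(1,2)[unfolded topspace_homtop] d that(3)] by simp
  show ?thesis
  proof (rule quotient_map_lift_exists[OF quotient_map_gclass cont resp])
    fix \<psi>
    assume \<psi>: "continuous_map (binom_top hom cmp homtop G C A) (binom_top hom cmp homtop G D A) \<psi>"
      and "\<psi> ` topspace (binom_top hom cmp homtop G C A) = (?qD \<circ> cmp d) ` topspace (homtop A C)"
      and \<psi>_gclass: "\<And>f. f \<in> topspace (homtop A C) \<Longrightarrow> \<psi> (?qC f) = (?qD \<circ> cmp d) f"
    show thesis
    proof (rule that[OF \<psi>])
      fix f assume "f \<in> hom A C"
      then show "\<psi> (?qC f) = ?qD (cmp d f)"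
        using \<psi>_gclass by (simp add: topspace_homtop)
    qed
  qed
qed

lemma arrow_transfer:
  assumes d: "d \<in> hom C D" and e: "e \<in> hom D C"
    and arrow_C: "arrow hom cmp homtop G C A k n"
  shows "arrow hom cmp homtop G D A k n"
  unfolding arrow_def
proof (intro allI impI)
  let ?qC = "gclass hom cmp G A C" and ?qD = "gclass hom cmp G A D"
  let ?BC = "binom_top hom cmp homtop G C A"
  fix col
  assume col: "borel_coloring (binom_top hom cmp homtop G D A) k col"
  obtain \<psi> where \<psi>: "continuous_map ?BC (binom_top hom cmp homtop G D A) \<psi>"
    and \<psi>_gclass: "\<And>f. f \<in> hom A C \<Longrightarrow> \<psi> (?qC f) = ?qD (cmp d f)"
    using binom_top_induced_map[OF d] by blast
  have col_\<psi>: "borel_coloring ?BC k (col \<circ> \<psi>)"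
    using borel_coloring_continuous_map_pullback[OF \<psi> col] .
  then obtain w where w: "w \<in> hom C C"
    and few: "card ((col \<circ> \<psi>) ` (\<lambda>f. ?qC (cmp w f)) ` hom A C) \<le> n"
    using arrow_C unfolding arrow_def by blast
  define w' where "w' = cmp d (cmp w e)"
  have we: "cmp w e \<in> hom D C"
    using hom_comp_closed[OF e w] .
  have w': "w' \<in> hom D D"
    unfolding w'_def using hom_comp_closed[OF we d] .
  have sub: "col ` (\<lambda>f. ?qD (cmp w' f)) ` hom A D \<subseteq> (col \<circ> \<psi>) ` (\<lambda>f. ?qC (cmp w f)) ` hom A C"
  proof clarify
    fix f assume f: "f \<in> hom A D"
    have ef: "cmp e f \<in> hom A C"
      using hom_comp_closed[OF f e] .
    have "cmp w' f = cmp d (cmp w (cmp e f))"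
      unfolding w'_def using comp_assoc_hom[OF f we d] comp_assoc_hom[OF f e w] by simp
    then have "col (?qD (cmp w' f)) = (col \<circ> \<psi>) (?qC (cmp w (cmp e f)))"
      using \<psi>_gclass[OF hom_comp_closed[OF ef w]] by simp
    then show "col (?qD (cmp w' f)) \<in> (col \<circ> \<psi>) ` (\<lambda>f. ?qC (cmp w f)) ` hom A C"
      using ef by blast
  qed
  have "(\<lambda>f. ?qC (cmp w f)) ` hom A C \<subseteq> topspace ?BC"
    unfolding topspace_binom_top using hom_comp_closed[OF _ w] by blast
  then have "finite ((col \<circ> \<psi>) ` (\<lambda>f. ?qC (cmp w f)) ` hom A C)"
    by (rule borel_coloring_image_finite[OF col_\<psi>])
  then have "card (col ` (\<lambda>f. ?qD (cmp w' f)) ` hom A D) \<le> n"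
    using card_mono[OF _ sub] few by linarith
  with w' show "\<exists>w\<in>hom D D. card (col ` (\<lambda>f. ?qD (cmp w f)) ` hom A D) \<le> n"
    by blast
qed

lemma TG_eq_if_hom_equiv:
  assumes "hom_equiv hom C D"
  shows "TG hom cmp homtop G A C = TG hom cmp homtop G A D"
proof -
  obtain d e where d: "d \<in> hom C D" and e: "e \<in> hom D C"
    using assms unfolding hom_equiv_def by blast
  have "arrow hom cmp homtop G C A k n = arrow hom cmp homtop G D A k n" for k n
    using arrow_transfer[OF d e] arrow_transfer[OF e d] by blast
  then show ?thesis
    unfolding TG_def by simp
qed

end

end

theorem corollary4p10:
  fixes hom :: "'o \<Rightarrow> 'o \<Rightarrow> 'm set" and cmp :: "'m \<Rightarrow> 'm \<Rightarrow> 'm"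
    and idm :: "'o \<Rightarrow> 'm" and homtop :: "'o \<Rightarrow> 'o \<Rightarrow> 'm topology"
    and G :: "'o \<Rightarrow> 'm set" and C D A :: 'o
  assumes cat: "top_category hom cmp idm homtop"
    and mono: "all_mono hom cmp"
    and CD: "hom_equiv hom C D"
    and grp: "\<And>B. aut_subgroup hom cmp idm B (G B)"
    and AC: "hom A C \<noteq> {}"
  shows "T hom cmp idm homtop A C = T hom cmp idm homtop A D \<and>
         ((\<forall>S. locally_compact_space (homtop A S) \<and> second_countable (homtop A S)
              \<and> Hausdorff_space (homtop A S))
         \<and> finite (G A) \<and> subtopology (homtop A A) (G A) = discrete_topology (G A)
         \<longrightarrow> TG hom cmp homtop G A C = TG hom cmp homtop G A D)"
proof -
  have "T hom cmp idm homtop A C = T hom cmp idm homtop A D"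
    unfolding T_def
    using TG_eq_if_hom_equiv[where G = "\<lambda>B. {idm B}", OF cat aut_subgroup_trivial[OF cat] CD] .
  moreover have "TG hom cmp homtop G A C = TG hom cmp homtop G A D"
    using TG_eq_if_hom_equiv[OF cat grp CD] .
  ultimately show ?thesis
    by blast
qed

end
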